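(* For $N\in\mathbb{N}$ and $z,w\in\mathbb{C}$ let $K_N(z,w)=\sum_{m=0}^{N-1}\frac{N^m}{m!}(z\overline w)^m$. For every $\lambda\in(0,1)$ there are a constant $C(\lambda)>0$ and a constant $\delta(\lambda)\in(0,1)$ such that for all $N\in\mathbb{N}$ and all $z,w\in\mathbb{C}$ with $|z|,|w|<\lambda$, $$\big|e^{Nz\overline w}-K_N(z,w)\big|\le C\,\frac{e^{N|z\overline w|}}{\sqrt N}\,\delta^N .$$ *)

theory Defs
  imports "HOL-Analysis.Analysis"
begin

definition K :: "nat \<Rightarrow> complex \<Rightarrow> complex \<Rightarrow> complex" where
  "K N z w = (\<Sum>m<N. of_nat N ^ m / of_nat (fact m) * (z * cnj w) ^ m)"

end

theory Submission
  imports Defs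
begin

text \<open>
  With \<open>u = z * cnj w\<close>, \<open>K N z w\<close> is the \<open>N\<close>-th partial sum of the exponential series of
  \<open>N * u\<close>. Since \<open>(N + m)! \<ge> N! * N^m\<close>, its tail is dominated by a geometric series,
  giving the bound \<open>(N |u|)^N / N! / (1 - |u|)\<close>; with \<open>N^N / N! \<le> e^N\<close> this is
  \<open>(|u| e^(1 - |u|))^N e^(N |u|) / (1 - |u|)\<close>. The map \<open>x \<mapsto> x e^(1 - x)\<close> increases on
  \<open>[0, 1]\<close> and is below \<open>1\<close> on \<open>[0, 1)\<close>, so for \<open>|u| < \<lambda>\<^sup>2\<close> the base is at most
  \<open>\<rho> = \<lambda>\<^sup>2 e^(1 - \<lambda>\<^sup>2) < 1\<close>. Finally \<open>\<rho>^N = q^N q^N\<close> with \<open>q = \<surd>\<rho>\<close>, and one factor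
  \<open>q^N\<close> absorbs \<open>\<surd>N\<close> because \<open>\<surd>N q^N \<le> N q^N \<le> 1 / (1 - q)\<close>.
\<close>

lemma fact_mult_power_le_fact_add: "fact n * real n ^ m \<le> fact (n + m)"
proof (induction m)
  case 0
  then show ?case by simp
next
  case (Suc m)
  have "fact n * real n ^ Suc m = real n * (fact n * real n ^ m)"
    by simp
  also have "\<dots> \<le> real (Suc (n + m)) * fact (n + m)"
    using Suc.IH by (intro mult_mono) auto
  also have "\<dots> = fact (n + Suc m)"
    by simp
  finally show ?case .
qed

lemma norm_exp_minus_partial_sum_le:
  fixes v :: "'a::{real_normed_algebra_1,banach}"
  assumes "norm v < real n"
  shows "norm (exp v - (\<Sum>m<n. v ^ m /\<^sub>R fact m)) \<le> norm v ^ n / fact n / (1 - norm v / n)"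
proof -
  let ?a = "norm v ^ n / fact n"
  have n: "0 < real n"
    using assms norm_ge_zero[of v] by linarith
  have tail: "(\<lambda>m. v ^ (m + n) /\<^sub>R fact (m + n)) sums (exp v - (\<Sum>m<n. v ^ m /\<^sub>R fact m))"
    using sums_split_initial_segment[OF exp_converges] by blast
  have geom: "(\<lambda>m. ?a * (norm v / n) ^ m) sums (?a * (1 / (1 - norm v / n)))"
    using assms n by (intro sums_mult geometric_sums) simp
  have "norm (v ^ (m + n) /\<^sub>R fact (m + n)) \<le> ?a * (norm v / n) ^ m" for m
  proof -
    have "norm (v ^ (m + n) /\<^sub>R fact (m + n)) \<le> norm v ^ (m + n) / fact (m + n)"
      using norm_power_ineq[of v "m + n"] by (simp add: divide_inverse_commute divide_right_mono)
    also have "\<dots> \<le> norm v ^ (m + n) / (fact n * real n ^ m)"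
      using fact_mult_power_le_fact_add[of n m] n by (intro divide_left_mono) (auto simp: add.commute)
    also have "\<dots> = ?a * (norm v / n) ^ m"
      by (simp add: power_add power_divide)
    finally show ?thesis .
  qed
  then have "norm (exp v - (\<Sum>m<n. v ^ m /\<^sub>R fact m)) \<le> ?a * (1 / (1 - norm v / n))"
    using norm_sums_le[OF tail geom] by blast
  then show ?thesis
    by simp
qed

lemma power_div_fact_le_exp:
  fixes x :: real
  assumes "0 \<le> x"
  shows "x ^ n / fact n \<le> exp x"
proof -
  have "summable (\<lambda>k. x ^ k / fact k)" and "exp x = (\<Sum>k. x ^ k / fact k)"
    using exp_converges[of x] by (auto simp: sums_iff divide_inverse_commute)
  moreover have "(\<Sum>k\<in>{n}. x ^ k / fact k) \<le> (\<Sum>k. x ^ k / fact k)"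
    using assms calculation(1) by (intro sum_le_suminf) auto
  ultimately show ?thesis
    by simp
qed

lemma norm_exp_scaled_minus_partial_sum_le:
  fixes u :: "'a::{real_normed_div_algebra,banach}"
  assumes "norm u < 1" and "n \<ge> 1"
  shows "norm (exp (of_nat n * u) - (\<Sum>m<n. (of_nat n * u) ^ m /\<^sub>R fact m))
    \<le> (norm u * exp (1 - norm u)) ^ n * exp (n * norm u) / (1 - norm u)"
proof -
  let ?x = "norm u"
  have norm_nu: "norm (of_nat n * u) = n * ?x"
    by (simp add: norm_mult)
  have "norm (exp (of_nat n * u) - (\<Sum>m<n. (of_nat n * u) ^ m /\<^sub>R fact m))
      \<le> (n * ?x) ^ n / fact n / (1 - ?x)"
    using norm_exp_minus_partial_sum_le[of "of_nat n * u" n] assms by (simp add: norm_nu)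
  also have "\<dots> = (real n ^ n / fact n) * ?x ^ n / (1 - ?x)"
    by (simp add: power_mult_distrib)
  also have "\<dots> \<le> exp n * ?x ^ n / (1 - ?x)"
    using assms by (intro divide_right_mono mult_right_mono power_div_fact_le_exp) auto
  also have "exp n = exp (1 - ?x) ^ n * exp (n * ?x)"
    by (simp add: algebra_simps flip: exp_of_nat_mult exp_add)
  finally show ?thesis
    by (simp add: power_mult_distrib mult_ac)
qed

lemma mult_exp_one_minus_mono:
  fixes x r :: real
  assumes "0 \<le> x" "x \<le> r" "r \<le> 1"
  shows "x * exp (1 - x) \<le> r * exp (1 - r)"
proof (cases "x = 0")
  case True
  then show ?thesis using assms by simp
next
  case False
  then have "0 < x" "0 < r"
    using assms by auto
  have "ln x - ln r \<le> (x - r) / r"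
    using \<open>0 < x\<close> \<open>0 < r\<close> by (rule ln_diff_le)
  also have "\<dots> \<le> x - r"
    using assms \<open>0 < r\<close> mult_left_mono_neg[of r 1 "x - r"] by (simp add: divide_le_eq)
  finally have "exp (ln x + (1 - x)) \<le> exp (ln r + (1 - r))"
    by simp
  then show ?thesis
    using \<open>0 < x\<close> \<open>0 < r\<close> by (simp add: exp_add)
qed

lemma mult_exp_one_minus_less_one:
  fixes r :: real
  assumes "0 < r" "r < 1"
  shows "r * exp (1 - r) < 1"
proof -
  have "ln r < r - 1"
    using assms ln_le_minus_one[of r] ln_eq_minus_one[of r] by fastforce
  then have "exp (ln r + (1 - r)) < exp 0"
    by simp
  then show ?thesis
    using assms by (simp add: exp_add)
qed

lemma sqrt_mult_power_le:
  fixes q :: real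
  assumes "0 \<le> q" "q < 1"
  shows "sqrt n * q ^ n \<le> 1 / (1 - q)"
proof -
  have "real n \<le> real n * real n"
    by (metis le_square of_nat_le_iff of_nat_mult)
  then have "sqrt n * q ^ n \<le> n * q ^ n"
    using assms by (intro mult_right_mono) (auto simp: real_sqrt_le_iff' power2_eq_square)
  also have "\<dots> = (\<Sum>k<n. q ^ n)"
    by simp
  also have "\<dots> \<le> (\<Sum>k<n. q ^ k)"
    using assms by (intro sum_mono power_decreasing) auto
  also have "\<dots> \<le> (\<Sum>k. q ^ k)"
    using assms by (intro sum_le_suminf) auto
  also have "\<dots> = 1 / (1 - q)"
    using suminf_geometric[of q] assms by simp
  finally show ?thesis .
qed

lemma K_eq_exp_partial_sum: "K n z w = (\<Sum>m<n. (of_nat n * (z * cnj w)) ^ m /\<^sub>R fact m)"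
  unfolding K_def
  by (rule sum.cong) (auto simp: scaleR_conv_of_real field_simps)

theorem lemma4p5:
  fixes lam :: real
  assumes "0 < lam" and "lam < 1"
  shows "\<exists>C \<delta>. C > 0 \<and> 0 < \<delta> \<and> \<delta> < 1 \<and>
    (\<forall>N::nat. N \<ge> 1 \<longrightarrow> (\<forall>z w :: complex. norm z < lam \<longrightarrow> norm w < lam \<longrightarrow>
       norm (exp (of_nat N * z * cnj w) - K N z w)
         \<le> C * exp (real N * norm (z * cnj w)) / sqrt (real N) * \<delta> ^ N))"
proof -
  define r where "r = lam\<^sup>2"
  define q where "q = sqrt (r * exp (1 - r))"
  define C where "C = 1 / ((1 - r) * (1 - q))"
  have r: "0 < r" "r < 1"
    using assms by (auto simp: r_def power_less_one_iff)
  then have q: "0 < q" "q < 1"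
    using mult_exp_one_minus_less_one by (auto simp: q_def)
  have "norm (exp (of_nat N * z * cnj w) - K N z w)
      \<le> C * exp (N * norm (z * cnj w)) / sqrt N * q ^ N"
    if "N \<ge> 1" "norm z < lam" "norm w < lam" for N :: nat and z w :: complex
  proof -
    define x where "x = norm (z * cnj w)"
    have "x < r"
      using that by (auto simp: x_def r_def norm_mult power2_eq_square intro: mult_strict_mono')
    then have x: "0 \<le> x" "x < 1"
      using r by (auto simp: x_def)
    have "norm (exp (of_nat N * z * cnj w) - K N z w)
        \<le> (x * exp (1 - x)) ^ N * exp (N * x) / (1 - x)"
      using norm_exp_scaled_minus_partial_sum_le[of "z * cnj w" N] that x
      by (simp add: K_eq_exp_partial_sum x_def mult.assoc)
    also have "\<dots> \<le> (q ^ N * q ^ N) * exp (N * x) / (1 - r)"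
      using x \<open>x < r\<close> r mult_exp_one_minus_mono[of x r]
      by (intro divide_mono mult_right_mono) (auto simp: q_def power_mono simp flip: power_mult_distrib)
    also have "\<dots> = (sqrt N * q ^ N) * (exp (N * x) / (1 - r)) / sqrt N * q ^ N"
      using that by simp
    also have "\<dots> \<le> 1 / (1 - q) * (exp (N * x) / (1 - r)) / sqrt N * q ^ N"
      using q r by (intro mult_right_mono divide_right_mono sqrt_mult_power_le) auto
    also have "\<dots> = C * exp (N * x) / sqrt N * q ^ N"
      by (simp add: C_def)
    finally show ?thesis
      by (simp add: x_def)
  qed
  moreover have "C > 0"
    using r q by (simp add: C_def)
  ultimately show ?thesis
    using q by blast
qed

end
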